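(* Let $\mathscr{M}$ be a von Neumann algebra. A unitary $U \in \mathscr{M}$ can be written as the product of two symmetries in $\mathscr{M}$ if and only if there is a unitary $W \in \mathscr{M}$ such that $U^* = W^*UW$, i.e. $U$ and $U^*$ are unitarily equivalent in $\mathscr{M}$.
   Context: A symmetry is a self-adjoint unitary. *)

theory Defs
  imports "HOL-Analysis.Analysis"
begin

class complex_vector = real_vector +
  fixes scaleC :: "complex \<Rightarrow> 'a \<Rightarrow> 'a" (infixr \<open>*\<^sub>C\<close> 75)
  assumes scaleC_add_right: "a *\<^sub>C (x + y) = a *\<^sub>C x + a *\<^sub>C y"
    and scaleC_add_left: "(a + b) *\<^sub>C x = a *\<^sub>C x + b *\<^sub>C x"
    and scaleC_scaleC: "a *\<^sub>C (b *\<^sub>C x) = (a * b) *\<^sub>C x"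
    and scaleC_one: "1 *\<^sub>C x = x"
    and scaleR_scaleC: "scaleR r x = (complex_of_real r) *\<^sub>C x"

class complex_inner = complex_vector + real_normed_vector +
  fixes cinner :: "'a \<Rightarrow> 'a \<Rightarrow> complex"
  assumes cinner_commute: "cinner x y = cnj (cinner y x)"
    and cinner_add_left: "cinner (x + y) z = cinner x z + cinner y z"
    and cinner_scaleC_left: "cinner (a *\<^sub>C x) y = cnj a * cinner x y"
    and cinner_nonneg: "0 \<le> Re (cinner x x)"
    and cinner_eq_zero_iff: "cinner x x = 0 \<longleftrightarrow> x = 0"
    and norm_eq_sqrt_cinner: "norm x = sqrt (Re (cinner x x))"

class chilbert_space = complex_inner + complete_space

definition bounded_clinear :: "('a::chilbert_space \<Rightarrow> 'a) \<Rightarrow> bool" where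
  "bounded_clinear T \<longleftrightarrow> bounded_linear T \<and> (\<forall>c x. T (c *\<^sub>C x) = c *\<^sub>C T x)"

text \<open>The Hilbert-space adjoint of a bounded operator (unique by non-degeneracy of the
  inner product; exists by the Riesz representation theorem).\<close>
definition adj :: "('a::chilbert_space \<Rightarrow> 'a) \<Rightarrow> ('a \<Rightarrow> 'a)" where
  "adj T = (SOME S. bounded_clinear S \<and> (\<forall>x y. cinner (T x) y = cinner x (S y)))"

definition unitary :: "('a::chilbert_space \<Rightarrow> 'a) \<Rightarrow> bool" where
  "unitary U \<longleftrightarrow> bounded_clinear U \<and> adj U \<circ> U = id \<and> U \<circ> adj U = id"

definition symmetry :: "('a::chilbert_space \<Rightarrow> 'a) \<Rightarrow> bool" where
  "symmetry S \<longleftrightarrow> unitary S \<and> adj S = S"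

definition commutant :: "('a::chilbert_space \<Rightarrow> 'a) set \<Rightarrow> ('a \<Rightarrow> 'a) set" where
  "commutant A = {T. bounded_clinear T \<and> (\<forall>X\<in>A. T \<circ> X = X \<circ> T)}"

text \<open>A von Neumann algebra on the Hilbert space: a self-adjoint set of bounded operators
  equal to its double commutant (equivalently, by von Neumann's double commutant theorem,
  a weak-operator closed unital *-subalgebra of B(H)).\<close>
definition von_neumann_algebra :: "('a::chilbert_space \<Rightarrow> 'a) set \<Rightarrow> bool" where
  "von_neumann_algebra M \<longleftrightarrow>
     (\<forall>T\<in>M. bounded_clinear T \<and> adj T \<in> M) \<and> commutant (commutant M) = M"

end

theory Submission
  imports Defs
begin

text \<open>If \<open>U = S\<^sub>1 S\<^sub>2\<close> with symmetries \<open>S\<^sub>i\<close>, then \<open>S\<^sub>1 U S\<^sub>1 = S\<^sub>2 S\<^sub>1 = U\<^sup>*\<close>.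
  Conversely, let \<open>W\<^sup>* U W = U\<^sup>*\<close>. Then \<open>W\<close> and \<open>W\<^sup>*\<close> both intertwine \<open>U\<close> with \<open>U\<^sup>*\<close>
  (\<open>X U = U\<^sup>* X\<close>), and hence so does the selfadjoint \<open>B = W + W\<^sup>*\<close>. The sign \<open>S\<close> of \<open>B\<close>, built from a
  square root of \<open>B\<^sup>2\<close> given by the binomial series of \<open>sqrt (1 - t)\<close>, is a symmetry on the
  orthogonal complement of \<open>ker B\<close> that still intertwines \<open>U\<close> with \<open>U\<^sup>*\<close>. On \<open>ker B\<close> we have
  \<open>W\<^sup>* = - W\<close>, so \<open>\<i> W\<close> is a symmetry there. Thus \<open>Z = S + \<i> W P\<close>, with \<open>P\<close> the projection onto
  \<open>ker B\<close>, is a symmetry with \<open>Z U = U\<^sup>* Z\<close>; then \<open>Z U\<close> is a symmetry as well and \<open>U = Z (Z U)\<close>.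
  All operators involved commute with the commutant of \<open>M\<close>, so they lie in \<open>M\<close>.\<close>

subclass (in chilbert_space) banach ..

section \<open>Complex inner product spaces\<close>

lemma cinner_add_right: "cinner x (y + z) = cinner x y + cinner x z"
  by (metis cinner_add_left cinner_commute complex_cnj_add)

lemma cinner_scaleC_right: "cinner x (a *\<^sub>C y) = a * cinner x y"
  by (metis cinner_commute cinner_scaleC_left complex_cnj_cnj complex_cnj_mult)

lemma cinner_zero_left [simp]: "cinner 0 y = 0"
  using cinner_add_left[of 0 0 y] by simp

lemma cinner_zero_right [simp]: "cinner y 0 = 0"
  using cinner_add_right[of y 0 0] by simp

lemma cinner_minus_left: "cinner (- x) y = - cinner x y"
  using cinner_add_left[of x "- x" y] by (simp add: add_eq_0_iff)

lemma cinner_minus_right: "cinner y (- x) = - cinner y x"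
  using cinner_add_right[of y x "- x"] by (simp add: add_eq_0_iff)

lemma cinner_diff_left: "cinner (x - z) y = cinner x y - cinner z y"
  using cinner_add_left[of x "- z" y] by (simp add: cinner_minus_left)

lemma cinner_diff_right: "cinner y (x - z) = cinner y x - cinner y z"
  using cinner_add_right[of y x "- z"] by (simp add: cinner_minus_right)

lemma cinner_scaleR_left: "cinner (r *\<^sub>R x) y = complex_of_real r * cinner x y"
  by (simp add: scaleR_scaleC cinner_scaleC_left)

lemma cinner_scaleR_right: "cinner y (r *\<^sub>R x) = complex_of_real r * cinner y x"
  by (simp add: scaleR_scaleC cinner_scaleC_right)

lemma cinner_self_eq_norm_sq: "cinner x x = complex_of_real ((norm x)\<^sup>2)"
proof -
  have "Im (cinner x x) = 0"
    using arg_cong[OF cinner_commute[of x x], of Im] by simp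
  then show ?thesis
    using cinner_nonneg[of x] by (simp add: norm_eq_sqrt_cinner complex_eq_iff)
qed

lemma norm_sq_eq_Re_cinner: "(norm x)\<^sup>2 = Re (cinner x x)"
  by (simp add: cinner_self_eq_norm_sq)

lemma norm_add_sq: "(norm (x + y))\<^sup>2 = (norm x)\<^sup>2 + 2 * Re (cinner x y) + (norm y)\<^sup>2"
proof -
  have "Re (cinner y x) = Re (cinner x y)"
    using arg_cong[OF cinner_commute[of y x], of Re] by simp
  then show ?thesis
    by (simp add: norm_sq_eq_Re_cinner cinner_add_left cinner_add_right)
qed

lemma norm_diff_sq: "(norm (x - y))\<^sup>2 = (norm x)\<^sup>2 - 2 * Re (cinner x y) + (norm y)\<^sup>2"
  using norm_add_sq[of x "- y"] by (simp add: cinner_minus_right)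

lemma Re_cinner_le_norm: "Re (cinner x y) \<le> norm x * norm y"
proof (cases "norm x * norm y = 0")
  case True
  then show ?thesis by auto
next
  case False
  then have pos: "norm x * norm y > 0" by (simp add: less_le)
  have "0 \<le> (norm (norm y *\<^sub>R x - norm x *\<^sub>R y))\<^sup>2" by simp
  also have "\<dots> = 2 * (norm x * norm y) * (norm x * norm y - Re (cinner x y))"
    unfolding norm_diff_sq
    by (simp add: cinner_scaleR_left cinner_scaleR_right power2_eq_square algebra_simps)
  finally show ?thesis using pos by (simp add: zero_le_mult_iff)
qed

lemma norm_scaleC: "norm (a *\<^sub>C x) = cmod a * norm x" for x :: "'a::complex_inner"
proof -
  have ca: "cnj a * a = complex_of_real ((cmod a)\<^sup>2)"
    by (metis complex_norm_square mult.commute)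
  have "(norm (a *\<^sub>C x))\<^sup>2 = Re ((cnj a * a) * cinner x x)"
    unfolding norm_sq_eq_Re_cinner cinner_scaleC_left cinner_scaleC_right by (simp only: ac_simps)
  also have "\<dots> = (cmod a * norm x)\<^sup>2"
    unfolding ca cinner_self_eq_norm_sq
    by (simp only: Re_complex_of_real flip: of_real_mult) (simp add: power_mult_distrib)
  finally show ?thesis by simp
qed

lemma norm_cinner_le: "cmod (cinner x y) \<le> norm x * norm y"
proof (cases "cinner x y = 0")
  case True
  then show ?thesis by simp
next
  case False
  define c where "c = cinner x y / cmod (cinner x y)"
  have "cmod c = 1" using False by (simp add: c_def norm_divide)
  have "cnj (cinner x y) * cinner x y = complex_of_real ((cmod (cinner x y))\<^sup>2)"
    by (metis complex_norm_square mult.commute)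
  then have "cnj c * cinner x y = complex_of_real (cmod (cinner x y))"
    using False by (simp add: c_def power2_eq_square)
  then have "cmod (cinner x y) = Re (cinner (c *\<^sub>C x) y)"
    by (simp add: cinner_scaleC_left)
  also have "\<dots> \<le> norm (c *\<^sub>C x) * norm y" by (rule Re_cinner_le_norm)
  also have "\<dots> = norm x * norm y" by (simp add: norm_scaleC \<open>cmod c = 1\<close>)
  finally show ?thesis .
qed

lemma cinner_ext_left: "(\<And>z. cinner x z = cinner y z) \<Longrightarrow> x = y"
  using cinner_eq_zero_iff[of "x - y"] by (simp add: cinner_diff_left)

lemma cinner_ext_right: "(\<And>z. cinner z x = cinner z y) \<Longrightarrow> x = y"
  using cinner_eq_zero_iff[of "x - y"] by (simp add: cinner_diff_right)

lemma bounded_linear_cinner_right: "bounded_linear (cinner x)"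
proof (rule bounded_linear_intro[where K = "norm x"])
  show "cinner x (r *\<^sub>R y) = r *\<^sub>R cinner x y" for r y
    by (simp add: cinner_scaleR_right scaleR_conv_of_real)
  show "norm (cinner x y) \<le> norm y * norm x" for y
    using norm_cinner_le[of x y] by (simp add: mult.commute)
qed (rule cinner_add_right)

lemma bounded_linear_cinner_left: "bounded_linear (\<lambda>x. cinner x y)"
proof (rule bounded_linear_intro[where K = "norm y"])
  show "cinner (r *\<^sub>R x) y = r *\<^sub>R cinner x y" for r x
    by (simp add: cinner_scaleR_left scaleR_conv_of_real)
  show "norm (cinner x y) \<le> norm x * norm y" for x
    by (rule norm_cinner_le)
qed (rule cinner_add_left)

lemma scaleC_zero_right [simp]: "a *\<^sub>C 0 = (0::'a::complex_vector)"
  using scaleC_add_right[of a 0 "0::'a"] by simp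

lemma scaleC_zero_left [simp]: "0 *\<^sub>C x = (0::'a::complex_vector)"
  using scaleC_add_left[of 0 0 x] by simp

lemma scaleC_minus_left: "(- a) *\<^sub>C x = - (a *\<^sub>C x)" for x :: "'a::complex_vector"
  using scaleC_add_left[of a "- a" x] by (simp add: add_eq_0_iff)

lemma scaleC_minus_right: "a *\<^sub>C (- x) = - (a *\<^sub>C x)" for x :: "'a::complex_vector"
  using scaleC_add_right[of a x "- x"] by (simp add: add_eq_0_iff)

lemma scaleC_diff_right: "a *\<^sub>C (x - y) = a *\<^sub>C x - a *\<^sub>C y" for x y :: "'a::complex_vector"
  using scaleC_add_right[of a x "- y"] by (simp add: scaleC_minus_right)

section \<open>Bounded complex-linear operators\<close>

lemma bounded_clinear_bounded_linear: "bounded_clinear T \<Longrightarrow> bounded_linear T"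
  by (simp add: bounded_clinear_def)

lemma clinear_scaleC: "bounded_clinear T \<Longrightarrow> T (c *\<^sub>C x) = c *\<^sub>C T x"
  by (simp add: bounded_clinear_def)

lemma clinear_add: "bounded_clinear T \<Longrightarrow> T (x + y) = T x + T y"
  by (simp add: bounded_clinear_def linear_simps)

lemma clinear_diff: "bounded_clinear T \<Longrightarrow> T (x - y) = T x - T y"
  by (simp add: bounded_clinear_def linear_simps)

lemma clinear_minus: "bounded_clinear T \<Longrightarrow> T (- x) = - T x"
  by (simp add: bounded_clinear_def linear_simps)

lemma clinear_zero: "bounded_clinear T \<Longrightarrow> T 0 = 0"
  by (simp add: bounded_clinear_def linear_simps)

lemma clinear_scaleR: "bounded_clinear T \<Longrightarrow> T (r *\<^sub>R x) = r *\<^sub>R T x"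
  by (simp add: bounded_clinear_def linear_simps)

lemma bounded_linear_scaleC: "bounded_linear (\<lambda>x::'a::complex_inner. c *\<^sub>C x)"
proof (rule bounded_linear_intro[where K = "cmod c"])
  show "c *\<^sub>C (r *\<^sub>R x) = r *\<^sub>R (c *\<^sub>C x)" for r and x :: 'a
    by (simp only: scaleR_scaleC scaleC_scaleC mult.commute)
  show "norm (c *\<^sub>C x) \<le> norm x * cmod c" for x :: 'a
    by (simp add: norm_scaleC mult.commute)
qed (rule scaleC_add_right)

lemma bounded_clinear_compose:
  assumes "bounded_clinear A" and "bounded_clinear B"
  shows "bounded_clinear (\<lambda>x. A (B x))"
  using assms bounded_linear_compose[of A B]
  by (simp add: bounded_clinear_def)

lemma bounded_clinear_comp: "bounded_clinear A \<Longrightarrow> bounded_clinear B \<Longrightarrow> bounded_clinear (A \<circ> B)"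
  using bounded_clinear_compose[of A B] by (simp add: o_def)

lemma bounded_clinear_add:
  assumes "bounded_clinear A" and "bounded_clinear B"
  shows "bounded_clinear (\<lambda>x. A x + B x)"
  using assms bounded_linear_add[of A B]
  by (simp add: bounded_clinear_def scaleC_add_right)

lemma bounded_clinear_sub:
  assumes "bounded_clinear A" and "bounded_clinear B"
  shows "bounded_clinear (\<lambda>x. A x - B x)"
  using assms bounded_linear_sub[of A B]
  by (simp add: bounded_clinear_def scaleC_diff_right)

lemma bounded_clinear_scaleC: "bounded_clinear A \<Longrightarrow> bounded_clinear (\<lambda>x. c *\<^sub>C A x)"
  using bounded_linear_compose[OF bounded_linear_scaleC[of c], of A]
  by (simp add: bounded_clinear_def scaleC_scaleC mult.commute)

lemma closed_vimage_0: "bounded_clinear A \<Longrightarrow> closed (A -` {0::'a::chilbert_space})"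
  by (simp add: closed_vimage bounded_clinear_bounded_linear linear_continuous_on)

section \<open>Orthogonal projections\<close>

definition csubspace :: "'a::complex_vector set \<Rightarrow> bool" where
  "csubspace V \<longleftrightarrow> 0 \<in> V \<and> (\<forall>x\<in>V. \<forall>y\<in>V. x + y \<in> V) \<and> (\<forall>c. \<forall>x\<in>V. c *\<^sub>C x \<in> V)"

definition orth_compl :: "'a::complex_inner set \<Rightarrow> 'a set" where
  "orth_compl V = {y. \<forall>v\<in>V. cinner v y = 0}"

definition orth_proj :: "'a::complex_inner set \<Rightarrow> 'a \<Rightarrow> 'a" where
  "orth_proj V x = (SOME p. p \<in> V \<and> (\<forall>v\<in>V. cinner v (x - p) = 0))"

lemma csubspace_0: "csubspace V \<Longrightarrow> 0 \<in> V"
  and csubspace_add: "csubspace V \<Longrightarrow> x \<in> V \<Longrightarrow> y \<in> V \<Longrightarrow> x + y \<in> V"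
  and csubspace_scaleC: "csubspace V \<Longrightarrow> x \<in> V \<Longrightarrow> c *\<^sub>C x \<in> V"
  by (simp_all add: csubspace_def)

lemma csubspace_scaleR: "csubspace V \<Longrightarrow> x \<in> V \<Longrightarrow> r *\<^sub>R x \<in> V"
  by (simp add: scaleR_scaleC csubspace_scaleC)

lemma csubspace_diff: "csubspace V \<Longrightarrow> x \<in> V \<Longrightarrow> y \<in> V \<Longrightarrow> x - y \<in> V"
  using csubspace_add[of V x "- y"] csubspace_scaleR[of V y "- 1"] by simp

lemma csubspace_vimage_0: "bounded_clinear A \<Longrightarrow> csubspace (A -` {0})"
  by (simp add: csubspace_def clinear_add clinear_zero clinear_scaleC)

lemma csubspace_orth_compl: "csubspace (orth_compl V)"
  by (simp add: csubspace_def orth_compl_def cinner_add_right cinner_scaleC_right)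

lemma closed_orth_compl: "closed (orth_compl V)"
proof -
  have "orth_compl V = (\<Inter>v\<in>V. cinner v -` {0})"
    by (auto simp: orth_compl_def)
  then show ?thesis
    by (simp add: closed_INT closed_vimage bounded_linear_cinner_right linear_continuous_on)
qed

lemma orth_compl_antimono: "A \<subseteq> B \<Longrightarrow> orth_compl B \<subseteq> orth_compl A"
  by (auto simp: orth_compl_def)

lemma orth_compl_sym: "A \<subseteq> orth_compl B \<longleftrightarrow> B \<subseteq> orth_compl A"
proof -
  have "cinner b a = 0 \<longleftrightarrow> cinner a b = 0" for a b :: 'a
    using cinner_commute[of a b] by auto
  then show ?thesis unfolding orth_compl_def by blast
qed

lemma subset_orth_compl_orth_compl: "A \<subseteq> orth_compl (orth_compl A)"
  using orth_compl_sym[of A "orth_compl A"] by blast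

lemma orth_compl_disjoint: "x \<in> V \<Longrightarrow> x \<in> orth_compl V \<Longrightarrow> x = 0"
  by (auto simp: orth_compl_def cinner_eq_zero_iff)

lemma linear_coeff_zero_if_quadratic_nonneg:
  fixes r q :: real
  assumes "q \<ge> 0" and "\<And>t. 0 \<le> - 2 * t * r + t\<^sup>2 * q"
  shows "r = 0"
proof -
  define s where "s = r / (q + 1)"
  have r: "r = s * (q + 1)" using assms(1) by (simp add: s_def)
  have "0 \<le> - 2 * s * r + s\<^sup>2 * q" by (rule assms(2))
  then have "0 \<le> s\<^sup>2 * (- q - 2)" unfolding r by (simp add: power2_eq_square algebra_simps)
  then have "s\<^sup>2 \<le> 0" using assms(1) by (simp add: zero_le_mult_iff)
  then show ?thesis using r by simp
qed

lemma parallelogram_midpoint: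
  fixes v w x :: "'a::complex_inner"
  shows "(norm (v - w))\<^sup>2 = 2 * (norm (x - v))\<^sup>2 + 2 * (norm (x - w))\<^sup>2 - 4 * (norm (x - (1/2::real) *\<^sub>R (v + w)))\<^sup>2"
proof -
  have "(x - v) + (x - w) = 2 *\<^sub>R (x - (1/2::real) *\<^sub>R (v + w))"
    by (simp add: algebra_simps scaleR_2)
  then have "(norm ((x - v) + (x - w)))\<^sup>2 = 4 * (norm (x - (1/2::real) *\<^sub>R (v + w)))\<^sup>2"
    by (simp add: power2_eq_square)
  moreover have "(norm ((x - v) + (x - w)))\<^sup>2 + (norm (v - w))\<^sup>2
      = 2 * (norm (x - v))\<^sup>2 + 2 * (norm (x - w))\<^sup>2"
    using norm_add_sq[of "x - v" "x - w"] norm_diff_sq[of "x - v" "x - w"] by (simp add: norm_minus_commute)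
  ultimately show ?thesis by linarith
qed

text \<open>A minimising sequence for the distance to \<open>V\<close> is Cauchy by the parallelogram law.\<close>

lemma exists_nearest_point:
  fixes V :: "'a::chilbert_space set"
  assumes cl: "closed V" and sub: "csubspace V"
  shows "\<exists>p\<in>V. \<forall>w\<in>V. norm (x - p) \<le> norm (x - w)"
proof -
  define d where "d = Inf ((\<lambda>v. (norm (x - v))\<^sup>2) ` V)"
  have lower: "d \<le> (norm (x - w))\<^sup>2" if "w \<in> V" for w
    unfolding d_def by (rule cInf_lower) (use that in \<open>auto intro: bdd_belowI[where m = 0]\<close>)
  have "\<exists>w\<in>V. (norm (x - w))\<^sup>2 < d + inverse (real (Suc n))" for n
    using cInf_lessD[of "(\<lambda>v. (norm (x - v))\<^sup>2) ` V" "d + inverse (real (Suc n))"]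
      csubspace_0[OF sub] by (auto simp: d_def)
  then obtain v where v: "\<And>n. v n \<in> V"
    and vd: "\<And>n. (norm (x - v n))\<^sup>2 < d + inverse (real (Suc n))"
    by metis
  have mid: "(norm (v m - v n))\<^sup>2 \<le> 2 * inverse (real (Suc n)) + 2 * inverse (real (Suc m))" for m n
  proof -
    have "(1/2::real) *\<^sub>R (v m + v n) \<in> V"
      by (intro csubspace_scaleR[OF sub] csubspace_add[OF sub] v)
    then show ?thesis
      using lower parallelogram_midpoint[of "v m" "v n" x] vd[of n] vd[of m] by fastforce
  qed
  have "Cauchy v"
  proof (rule CauchyI)
    fix e :: real
    assume e: "0 < e"
    obtain N :: nat where N: "4 / e\<^sup>2 < real N" using reals_Archimedean2 by blast
    have "norm (v m - v n) < e" if "N \<le> m" "N \<le> n" for m n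
    proof -
      have "4 / e\<^sup>2 < real (Suc N)" using N by simp
      then have "4 * inverse (real (Suc N)) < e\<^sup>2" using e by (simp add: field_simps)
      moreover have "inverse (real (Suc n)) \<le> inverse (real (Suc N))"
        and "inverse (real (Suc m)) \<le> inverse (real (Suc N))"
        using that by (simp_all add: field_simps)
      ultimately have "(norm (v m - v n))\<^sup>2 < e\<^sup>2" using mid[of m n] by linarith
      then show ?thesis using e by (simp add: power_less_imp_less_base)
    qed
    then show "\<exists>N. \<forall>m\<ge>N. \<forall>n\<ge>N. norm (v m - v n) < e" by blast
  qed
  then obtain p where vp: "v \<longlonglongrightarrow> p" using Cauchy_convergent convergent_def by blast
  have "(\<lambda>n. (norm (x - v n))\<^sup>2) \<longlonglongrightarrow> (norm (x - p))\<^sup>2"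
    by (intro tendsto_intros vp)
  moreover have "(\<lambda>n. d + inverse (real (Suc n))) \<longlonglongrightarrow> d + 0"
    by (intro tendsto_intros LIMSEQ_inverse_real_of_nat)
  ultimately have "(norm (x - p))\<^sup>2 \<le> d"
    using vd by (intro LIMSEQ_le) (auto intro: less_imp_le)
  then have "norm (x - p) \<le> norm (x - w)" if "w \<in> V" for w
  proof -
    have "(norm (x - p))\<^sup>2 \<le> (norm (x - w))\<^sup>2"
      using \<open>(norm (x - p))\<^sup>2 \<le> d\<close> lower[OF that] by linarith
    then show ?thesis by (rule power2_le_imp_le) simp
  qed
  then show ?thesis using closed_sequentially[OF cl v vp] by blast
qed

lemma nearest_point_orthogonal:
  assumes sub: "csubspace V" and "p \<in> V" and nearest: "\<And>w. w \<in> V \<Longrightarrow> norm (x - p) \<le> norm (x - w)"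
    and "v \<in> V"
  shows "cinner v (x - p) = 0"
proof -
  have Re0: "Re (cinner (x - p) w) = 0" if w: "w \<in> V" for w
  proof (rule linear_coeff_zero_if_quadratic_nonneg[where q = "(norm w)\<^sup>2"])
    fix t :: real
    have "p + t *\<^sub>R w \<in> V" by (intro csubspace_add[OF sub] csubspace_scaleR[OF sub] \<open>p \<in> V\<close> w)
    then have "(norm (x - p))\<^sup>2 \<le> (norm ((x - p) - t *\<^sub>R w))\<^sup>2"
      using power_mono[OF nearest norm_ge_zero, of _ 2] by (simp add: algebra_simps)
    then show "0 \<le> - 2 * t * Re (cinner (x - p) w) + t\<^sup>2 * (norm w)\<^sup>2"
      by (simp add: norm_diff_sq cinner_scaleR_right power_mult_distrib)
  qed simp
  have "Im (cinner (x - p) v) = 0"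
    using Re0[OF csubspace_scaleC[OF sub \<open>v \<in> V\<close>, of \<i>]] by (simp add: cinner_scaleC_right)
  then have "cinner (x - p) v = 0" using Re0[OF \<open>v \<in> V\<close>] by (simp add: complex_eq_iff)
  then show ?thesis using cinner_commute[of v "x - p"] by simp
qed

lemma exists_orth_proj:
  fixes V :: "'a::chilbert_space set"
  assumes "closed V" and "csubspace V"
  shows "\<exists>p\<in>V. \<forall>v\<in>V. cinner v (x - p) = 0"
  using exists_nearest_point[OF assms, of x] nearest_point_orthogonal[OF assms(2)] by blast

context
  fixes V :: "'a::chilbert_space set"
  assumes closed: "closed V" and subspace: "csubspace V"
begin

lemma orth_proj_in: "orth_proj V x \<in> V"
  and orth_proj_orthogonal: "v \<in> V \<Longrightarrow> cinner v (x - orth_proj V x) = 0"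
  using someI_ex[OF exists_orth_proj[OF closed subspace, of x, unfolded Bex_def]]
  by (auto simp: orth_proj_def)

lemma orth_proj_unique:
  assumes p: "p \<in> V" and orthogonal: "\<And>v. v \<in> V \<Longrightarrow> cinner v (x - p) = 0"
  shows "orth_proj V x = p"
proof -
  have d: "p - orth_proj V x \<in> V" by (intro csubspace_diff[OF subspace] p orth_proj_in)
  have "cinner (p - orth_proj V x) (p - orth_proj V x)
      = cinner (p - orth_proj V x) (x - orth_proj V x) - cinner (p - orth_proj V x) (x - p)"
    by (simp add: cinner_diff_right[symmetric])
  also have "\<dots> = 0" using orth_proj_orthogonal[OF d] orthogonal[OF d] by simp
  finally show ?thesis by (simp add: cinner_eq_zero_iff)
qed

lemma orth_proj_id: "x \<in> V \<Longrightarrow> orth_proj V x = x"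
  by (rule orth_proj_unique) auto

lemma orth_proj_eq_0: "x \<in> orth_compl V \<Longrightarrow> orth_proj V x = 0"
  by (rule orth_proj_unique) (auto simp: orth_compl_def csubspace_0[OF subspace])

lemma orth_proj_residual: "x - orth_proj V x \<in> orth_compl V"
  using orth_proj_orthogonal by (auto simp: orth_compl_def)

lemma orth_proj_idem: "orth_proj V (orth_proj V x) = orth_proj V x"
  by (rule orth_proj_id[OF orth_proj_in])

lemma orth_proj_selfadjoint: "cinner (orth_proj V x) y = cinner x (orth_proj V y)"
proof -
  have "cinner (orth_proj V x) (y - orth_proj V y) = 0"
    and "cinner (x - orth_proj V x) (orth_proj V y) = 0"
    using orth_proj_orthogonal[OF orth_proj_in, of x y] orth_proj_orthogonal[OF orth_proj_in, of y x]
      cinner_commute[of "x - orth_proj V x"] by auto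
  then show ?thesis by (simp add: cinner_diff_right cinner_diff_left)
qed

lemma bounded_clinear_orth_proj: "bounded_clinear (orth_proj V)"
proof -
  have add: "orth_proj V (x + y) = orth_proj V x + orth_proj V y" for x y
  proof (intro orth_proj_unique csubspace_add[OF subspace] orth_proj_in)
    fix v
    assume "v \<in> V"
    then show "cinner v (x + y - (orth_proj V x + orth_proj V y)) = 0"
      using orth_proj_orthogonal[of v x] orth_proj_orthogonal[of v y]
      by (simp only: add_diff_add cinner_add_right) simp
  qed
  have scaleC: "orth_proj V (c *\<^sub>C x) = c *\<^sub>C orth_proj V x" for c x
    using orth_proj_orthogonal[of _ x]
    by (intro orth_proj_unique csubspace_scaleC[OF subspace] orth_proj_in)
      (simp add: scaleC_diff_right[symmetric] cinner_scaleC_right)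
  have "norm (orth_proj V x) \<le> norm x * 1" for x
  proof -
    have "cinner (orth_proj V x) (x - orth_proj V x) = 0"
      by (rule orth_proj_orthogonal[OF orth_proj_in])
    then have "(norm x)\<^sup>2 = (norm (orth_proj V x))\<^sup>2 + (norm (x - orth_proj V x))\<^sup>2"
      using norm_add_sq[of "orth_proj V x" "x - orth_proj V x"] by simp
    then have "(norm (orth_proj V x))\<^sup>2 \<le> (norm x)\<^sup>2" by simp
    then show ?thesis using power2_le_imp_le by simp
  qed
  then have "bounded_linear (orth_proj V)"
    by (intro bounded_linear_intro[where K = 1] add) (simp only: scaleR_scaleC scaleC)
  then show ?thesis by (simp add: bounded_clinear_def scaleC)
qed

lemma orth_compl_orth_compl: "orth_compl (orth_compl V) = V"
proof
  show "orth_compl (orth_compl V) \<subseteq> V"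
  proof
    fix y
    assume y: "y \<in> orth_compl (orth_compl V)"
    have "orth_proj V y \<in> orth_compl (orth_compl V)"
      using subset_orth_compl_orth_compl orth_proj_in by blast
    then have "y - orth_proj V y \<in> orth_compl (orth_compl V)"
      using y by (intro csubspace_diff[OF csubspace_orth_compl])
    then have "y = orth_proj V y"
      using orth_compl_disjoint[OF orth_proj_residual] by simp
    then show "y \<in> V" using orth_proj_in by metis
  qed
qed (rule subset_orth_compl_orth_compl)

end

lemma orth_proj_sum_eq_id:
  fixes V1 V2 V3 :: "'a::chilbert_space set"
  assumes closed: "closed V1" "closed V2" "closed V3"
    and subspace: "csubspace V1" "csubspace V2" "csubspace V3"
    and orthogonal: "V1 \<subseteq> orth_compl V2" "V1 \<subseteq> orth_compl V3" "V2 \<subseteq> orth_compl V3"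
    and complete: "orth_compl V1 \<inter> orth_compl V2 \<inter> orth_compl V3 \<subseteq> {0}"
  shows "orth_proj V1 x + orth_proj V2 x + orth_proj V3 x = x"
proof -
  define r where "r = x - orth_proj V1 x - orth_proj V2 x - orth_proj V3 x"
  have in_V: "orth_proj V1 x \<in> V1" "orth_proj V2 x \<in> V2" "orth_proj V3 x \<in> V3"
    using orth_proj_in closed subspace by blast+
  have orth: "V2 \<subseteq> orth_compl V1" "V3 \<subseteq> orth_compl V1" "V3 \<subseteq> orth_compl V2"
    using orthogonal orth_compl_sym by blast+
  have diff: "a - b - c \<in> orth_compl V" if "a \<in> orth_compl V" "b \<in> orth_compl V" "c \<in> orth_compl V"
    for a b c and V :: "'a set"
    using that by (intro csubspace_diff[OF csubspace_orth_compl])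
  have "r = (x - orth_proj V1 x) - orth_proj V2 x - orth_proj V3 x"
    and "r = (x - orth_proj V2 x) - orth_proj V1 x - orth_proj V3 x"
    and "r = (x - orth_proj V3 x) - orth_proj V1 x - orth_proj V2 x"
    by (simp_all add: r_def algebra_simps)
  moreover have "x - orth_proj V1 x \<in> orth_compl V1" "x - orth_proj V2 x \<in> orth_compl V2"
    "x - orth_proj V3 x \<in> orth_compl V3"
    using orth_proj_residual closed subspace by blast+
  ultimately have "r \<in> orth_compl V1" "r \<in> orth_compl V2" "r \<in> orth_compl V3"
    using diff in_V orthogonal orth by (metis subsetD)+
  then have "r = 0" using complete by blast
  then show ?thesis by (simp add: r_def algebra_simps)
qed

section \<open>Adjoints\<close>

lemma riesz_representation:
  fixes f :: "'a::chilbert_space \<Rightarrow> complex"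
  assumes f: "bounded_linear f" and f_scaleC: "\<And>c x. f (c *\<^sub>C x) = c * f x"
  shows "\<exists>y. \<forall>x. f x = cinner y x"
proof (cases "\<forall>x. f x = 0")
  case True
  then show ?thesis by (intro exI[of _ 0]) simp
next
  case False
  then obtain x0 where x0: "f x0 \<noteq> 0" by blast
  define N where "N = f -` {0}"
  have closed_N: "closed N"
    unfolding N_def by (simp add: closed_vimage f linear_continuous_on)
  have subspace_N: "csubspace N"
    using f by (simp add: N_def csubspace_def f_scaleC linear_simps)
  define z where "z = x0 - orth_proj N x0"
  have z_orth: "\<And>v. v \<in> N \<Longrightarrow> cinner v z = 0"
    unfolding z_def by (rule orth_proj_orthogonal[OF closed_N subspace_N])
  have "f (orth_proj N x0) = 0" using orth_proj_in[OF closed_N subspace_N] by (simp add: N_def)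
  then have "f z = f x0" unfolding z_def using f by (simp add: linear_simps)
  then have "cinner z z \<noteq> 0" using x0 f by (auto simp: cinner_eq_zero_iff linear_simps)
  have "f x = cinner (cnj (f z / cinner z z) *\<^sub>C z) x" for x
  proof -
    have "f x *\<^sub>C z - f z *\<^sub>C x \<in> N"
      using f by (simp add: N_def linear_simps f_scaleC)
    from z_orth[OF this] have "cnj (cinner (f x *\<^sub>C z - f z *\<^sub>C x) z) = 0" by simp
    then have "f x * cinner z z = f z * cinner z x"
      by (simp add: cinner_commute[symmetric] cinner_diff_right cinner_scaleC_right)
    then show ?thesis using \<open>cinner z z \<noteq> 0\<close> by (simp add: cinner_scaleC_left field_simps)
  qed
  then show ?thesis by blast
qed

lemma exists_adjoint:
  fixes T :: "'a::chilbert_space \<Rightarrow> 'a"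
  assumes T: "bounded_clinear T"
  shows "\<exists>S. bounded_clinear S \<and> (\<forall>x y. cinner (T x) y = cinner x (S y))"
proof -
  have "\<exists>z. \<forall>x. cinner y (T x) = cinner z x" for y
    using T by (intro riesz_representation bounded_linear_compose[OF bounded_linear_cinner_right])
      (simp_all add: bounded_clinear_bounded_linear clinear_scaleC cinner_scaleC_right)
  then obtain S where S: "\<And>y x. cinner y (T x) = cinner (S y) x" by metis
  have S_adj: "cinner (T x) y = cinner x (S y)" for x y
    using S[of y x] cinner_commute[of "T x" y] cinner_commute[of x "S y"] by simp
  have S_add: "S (y1 + y2) = S y1 + S y2" for y1 y2
    by (rule cinner_ext_left) (simp add: S[symmetric] cinner_add_left)
  have S_scaleC: "S (c *\<^sub>C y) = c *\<^sub>C S y" for c y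
    by (rule cinner_ext_left) (simp add: S[symmetric] cinner_scaleC_left)
  obtain K where "K > 0" and K: "\<And>x. norm (T x) \<le> norm x * K"
    using bounded_linear.pos_bounded[OF bounded_clinear_bounded_linear[OF T]] by blast
  have "norm (S y) \<le> norm y * K" for y
  proof (cases "S y = 0")
    case True
    then show ?thesis using \<open>K > 0\<close> by simp
  next
    case False
    have "norm (S y) * norm (S y) = Re (cinner y (T (S y)))"
      by (simp add: norm_sq_eq_Re_cinner S flip: power2_eq_square)
    also have "\<dots> \<le> norm y * norm (T (S y))" by (rule Re_cinner_le_norm)
    also have "\<dots> \<le> norm (S y) * (norm y * K)"
      using K[of "S y"] by (simp add: mult_left_mono mult.left_commute)
    finally show ?thesis using False by simp
  qed
  then have "bounded_linear S"
    by (intro bounded_linear_intro[where K = K] S_add) (simp only: scaleR_scaleC S_scaleC)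
  then show ?thesis using S_adj S_scaleC by (auto simp: bounded_clinear_def)
qed

lemma
  fixes T :: "'a::chilbert_space \<Rightarrow> 'a"
  assumes "bounded_clinear T"
  shows bounded_clinear_adj: "bounded_clinear (adj T)"
    and cinner_adj_right: "cinner (T x) y = cinner x (adj T y)"
proof -
  have "bounded_clinear (adj T) \<and> (\<forall>x y. cinner (T x) y = cinner x (adj T y))"
    unfolding adj_def by (rule someI_ex[OF exists_adjoint[OF assms]])
  then show "bounded_clinear (adj T)" and "cinner (T x) y = cinner x (adj T y)" by simp_all
qed

lemma cinner_adj_left:
  "bounded_clinear T \<Longrightarrow> cinner (adj T x) y = cinner x (T y)"
  using cinner_adj_right[of T y x] cinner_commute[of "adj T x" y] cinner_commute[of x "T y"]
  by simp

lemma adj_unique: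
  assumes "bounded_clinear T" and "\<And>x y. cinner (T x) y = cinner x (S y)"
  shows "adj T = S"
proof
  fix y
  show "adj T y = S y"
    by (rule cinner_ext_right) (simp only: cinner_adj_right[OF assms(1), symmetric] assms(2))
qed

lemma adj_adj:
  assumes "bounded_clinear T"
  shows "adj (adj T) = T"
  by (rule adj_unique[OF bounded_clinear_adj[OF assms] cinner_adj_left[OF assms]])

lemma adj_comp:
  assumes "bounded_clinear A" and "bounded_clinear B"
  shows "adj (A \<circ> B) = adj B \<circ> adj A"
proof (rule adj_unique)
  show "bounded_clinear (A \<circ> B)" using assms by (rule bounded_clinear_comp)
  show "cinner ((A \<circ> B) x) y = cinner x ((adj B \<circ> adj A) y)" for x y
    by (simp add: cinner_adj_right[OF assms(1)] cinner_adj_right[OF assms(2)])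
qed

lemma adj_commute:
  assumes "bounded_clinear A" and "bounded_clinear B" and "A \<circ> B = B \<circ> A"
  shows "adj A \<circ> adj B = adj B \<circ> adj A"
proof -
  have "adj A \<circ> adj B = adj (B \<circ> A)" using adj_comp[OF assms(2,1)] by simp
  also have "\<dots> = adj B \<circ> adj A" unfolding assms(3)[symmetric] using assms(1,2) by (rule adj_comp)
  finally show ?thesis .
qed

definition selfadjoint :: "('a::chilbert_space \<Rightarrow> 'a) \<Rightarrow> bool" where
  "selfadjoint T \<longleftrightarrow> bounded_clinear T \<and> (\<forall>x y. cinner (T x) y = cinner x (T y))"

lemma selfadjoint_bounded_clinear: "selfadjoint T \<Longrightarrow> bounded_clinear T"
  and selfadjoint_cinner: "selfadjoint T \<Longrightarrow> cinner (T x) y = cinner x (T y)"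
  by (simp_all add: selfadjoint_def)

lemma selfadjoint_adj: "selfadjoint T \<Longrightarrow> adj T = T"
  unfolding selfadjoint_def by (blast intro: adj_unique)

lemma selfadjoint_orth_proj: "closed V \<Longrightarrow> csubspace V \<Longrightarrow> selfadjoint (orth_proj V)"
  by (simp add: selfadjoint_def bounded_clinear_orth_proj orth_proj_selfadjoint)

lemma selfadjoint_add: "selfadjoint A \<Longrightarrow> selfadjoint B \<Longrightarrow> selfadjoint (\<lambda>x. A x + B x)"
  by (simp add: selfadjoint_def bounded_clinear_add cinner_add_left cinner_add_right)

lemma selfadjoint_diff: "selfadjoint A \<Longrightarrow> selfadjoint B \<Longrightarrow> selfadjoint (\<lambda>x. A x - B x)"
  by (simp add: selfadjoint_def bounded_clinear_sub cinner_diff_left cinner_diff_right)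

lemma selfadjoint_vimage_0:
  assumes "selfadjoint A"
  shows "A -` {0} = orth_compl (range A)"
proof (intro set_eqI iffI)
  fix x
  assume "x \<in> orth_compl (range A)"
  then have "cinner (A (A x)) x = 0" by (auto simp: orth_compl_def)
  then show "x \<in> A -` {0}"
    by (simp add: selfadjoint_cinner[OF assms, of "A x" x] cinner_eq_zero_iff)
qed (auto simp: orth_compl_def selfadjoint_cinner[OF assms])

lemma unitaryD:
  assumes "unitary U"
  shows "bounded_clinear U" and "adj U (U x) = x" and "U (adj U x) = x"
  using assms by (auto simp: unitary_def fun_eq_iff)

lemma orth_proj_commute:
  fixes T :: "'a::chilbert_space \<Rightarrow> 'a"
  assumes closed: "closed V" and subspace: "csubspace V" and T: "bounded_clinear T"
    and invariant: "\<And>v. v \<in> V \<Longrightarrow> T v \<in> V" and invariant_adj: "\<And>v. v \<in> V \<Longrightarrow> adj T v \<in> V"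
  shows "T (orth_proj V x) = orth_proj V (T x)"
proof (rule orth_proj_unique[OF closed subspace, symmetric])
  show "T (orth_proj V x) \<in> V" by (rule invariant[OF orth_proj_in[OF closed subspace]])
  fix v
  assume "v \<in> V"
  have "cinner v (T x - T (orth_proj V x)) = cinner (adj T v) (x - orth_proj V x)"
    by (simp add: cinner_adj_left[OF T] clinear_diff[OF T])
  also have "\<dots> = 0" by (rule orth_proj_orthogonal[OF closed subspace invariant_adj[OF \<open>v \<in> V\<close>]])
  finally show "cinner v (T x - T (orth_proj V x)) = 0" .
qed

lemma orth_proj_vimage_0_commute:
  fixes A T :: "'a::chilbert_space \<Rightarrow> 'a"
  assumes A: "bounded_clinear A" and T: "bounded_clinear T"
    and "\<And>x. A x = 0 \<Longrightarrow> A (T x) = 0" and "\<And>x. A x = 0 \<Longrightarrow> A (adj T x) = 0"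
  shows "T (orth_proj (A -` {0}) x) = orth_proj (A -` {0}) (T x)"
  by (rule orth_proj_commute[OF closed_vimage_0[OF A] csubspace_vimage_0[OF A] T])
    (simp_all add: assms(3,4))

section \<open>Square roots\<close>

lemma bounded_bilinear_sum_product:
  fixes prod :: "'a::real_normed_vector \<Rightarrow> 'b::real_normed_vector \<Rightarrow> 'c::real_normed_vector"
  assumes "bounded_bilinear prod"
  shows "prod (sum a A) (sum b B) = (\<Sum>(i, j)\<in>A \<times> B. prod (a i) (b j))"
proof -
  have "prod (sum a A) (sum b B) = (\<Sum>i\<in>A. prod (a i) (sum b B))"
    by (rule bounded_bilinear.sum_left[OF assms])
  also have "\<dots> = (\<Sum>i\<in>A. \<Sum>j\<in>B. prod (a i) (b j))"
    by (simp only: bounded_bilinear.sum_right[OF assms])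
  finally show ?thesis by (simp only: sum.cartesian_product)
qed

lemma norm_sum_bounded_bilinear_le:
  fixes prod :: "'a::real_normed_vector \<Rightarrow> 'b::real_normed_vector \<Rightarrow> 'c::real_normed_vector"
  assumes "\<And>x y. norm (prod x y) \<le> norm x * norm y * K"
  shows "norm (\<Sum>(i, j)\<in>A. prod (a i) (b j)) \<le> (\<Sum>(i, j)\<in>A. norm (a i) * norm (b j)) * K"
proof -
  have "norm (\<Sum>(i, j)\<in>A. prod (a i) (b j)) \<le> (\<Sum>(i, j)\<in>A. norm (a i) * norm (b j) * K)"
    by (intro order_trans[OF norm_sum] sum_mono) (use assms in \<open>simp split: prod.splits\<close>)
  also have "\<dots> = (\<Sum>(i, j)\<in>A. norm (a i) * norm (b j)) * K"
    by (simp add: sum_distrib_right case_prod_beta)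
  finally show ?thesis .
qed

text \<open>The terms of the square \<open>{..<n} \<times> {..<n}\<close> outside the triangle \<open>i + j < n\<close> are
  dominated by the corresponding terms for the norms, whose sum vanishes in the limit by the
  scalar Cauchy product theorem.\<close>

lemma bounded_bilinear_Cauchy_product_sums:
  fixes a :: "nat \<Rightarrow> 'a::banach" and b :: "nat \<Rightarrow> 'b::banach" and prod :: "'a \<Rightarrow> 'b \<Rightarrow> 'c::banach"
  assumes prod: "bounded_bilinear prod"
    and a: "summable (\<lambda>k. norm (a k))" and b: "summable (\<lambda>k. norm (b k))"
  shows "(\<lambda>k. \<Sum>i\<le>k. prod (a i) (b (k - i))) sums prod (\<Sum>k. a k) (\<Sum>k. b k)"
proof -
  obtain K where "K > 0" and K: "\<And>x y. norm (prod x y) \<le> norm x * norm y * K"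
    using bounded_bilinear.pos_bounded[OF prod] by blast
  let ?S1 = "\<lambda>n::nat. {..<n} \<times> {..<n}" and ?S2 = "\<lambda>n::nat. {(i, j). i + j < n}"
  let ?g = "\<lambda>(i, j). prod (a i) (b j)" and ?f = "\<lambda>(i, j). norm (a i) * norm (b j)"
  have S2_S1: "?S2 n \<subseteq> ?S1 n" for n by auto
  have "(\<lambda>n. prod (\<Sum>k<n. a k) (\<Sum>k<n. b k)) \<longlonglongrightarrow> prod (\<Sum>k. a k) (\<Sum>k. b k)"
    using summable_norm_cancel[OF a] summable_norm_cancel[OF b]
    by (intro bounded_bilinear.tendsto[OF prod] summable_LIMSEQ)
  then have lim_S1: "(\<lambda>n. sum ?g (?S1 n)) \<longlonglongrightarrow> prod (\<Sum>k. a k) (\<Sum>k. b k)"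
    by (simp only: bounded_bilinear_sum_product[OF prod])
  define P where "P = (\<Sum>k. norm (a k)) * (\<Sum>k. norm (b k))"
  have "(\<lambda>n. (\<Sum>k<n. norm (a k)) * (\<Sum>k<n. norm (b k))) \<longlonglongrightarrow> P"
    unfolding P_def using a b by (intro tendsto_mult summable_LIMSEQ)
  then have f_S1: "(\<lambda>n. sum ?f (?S1 n)) \<longlonglongrightarrow> P"
    by (simp only: sum_product sum.cartesian_product)
  have "(\<lambda>k. \<Sum>i\<le>k. norm (a i) * norm (b (k - i))) sums P"
    unfolding P_def using a b by (intro Cauchy_product_sums) simp_all
  then have f_S2: "(\<lambda>n. sum ?f (?S2 n)) \<longlonglongrightarrow> P"
    by (simp only: sums_def sum.triangle_reindex)
  have "(\<lambda>n. sum ?g (?S1 n) - sum ?g (?S2 n)) \<longlonglongrightarrow> 0"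
  proof (rule tendsto_0_le)
    show "(\<lambda>n. sum ?f (?S1 n) - sum ?f (?S2 n)) \<longlonglongrightarrow> 0"
      using tendsto_diff[OF f_S1 f_S2] by simp
    have "norm (sum ?g (?S1 n) - sum ?g (?S2 n)) \<le> norm (sum ?f (?S1 n) - sum ?f (?S2 n)) * K" for n
    proof -
      have "norm (sum ?g (?S1 n) - sum ?g (?S2 n)) = norm (sum ?g (?S1 n - ?S2 n))"
        by (simp add: sum_diff S2_S1)
      also have "\<dots> \<le> (sum ?f (?S1 n) - sum ?f (?S2 n)) * K"
        using norm_sum_bounded_bilinear_le[OF K, of a b "?S1 n - ?S2 n"]
        by (simp only: sum_diff[OF finite_cartesian_product[OF finite_lessThan finite_lessThan] S2_S1])
      also have "\<dots> \<le> norm (sum ?f (?S1 n) - sum ?f (?S2 n)) * K"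
        using \<open>K > 0\<close> by (intro mult_right_mono) simp_all
      finally show ?thesis .
    qed
    then show "\<forall>\<^sub>F n in sequentially. norm (sum ?g (?S1 n) - sum ?g (?S2 n))
        \<le> norm (sum ?f (?S1 n) - sum ?f (?S2 n)) * K"
      by simp
  qed
  with lim_S1 have "(\<lambda>n. sum ?g (?S2 n)) \<longlonglongrightarrow> prod (\<Sum>k. a k) (\<Sum>k. b k)"
    by (rule Lim_transform2)
  then show ?thesis by (simp only: sums_def sum.triangle_reindex)
qed

text \<open>The Taylor coefficients of \<open>sqrt (1 - t)\<close> and of \<open>1 / sqrt (1 - t)\<close>.\<close>

definition sqrt_coeff :: "nat \<Rightarrow> real" where
  "sqrt_coeff n = (-1) ^ n * ((1/2) gchoose n)"

definition inv_sqrt_coeff :: "nat \<Rightarrow> real" where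
  "inv_sqrt_coeff n = (-1) ^ n * ((-1/2) gchoose n)"

lemma sqrt_coeff_Suc: "sqrt_coeff (Suc n) = inv_sqrt_coeff (Suc n) - inv_sqrt_coeff n"
proof -
  have "(1/2::real) gchoose (Suc n) = ((-1/2) + 1) gchoose (Suc n)" by simp
  also have "\<dots> = ((-1/2) gchoose n) + ((-1/2) gchoose (Suc n))" by (rule gbinomial_Suc_Suc)
  finally show ?thesis by (simp add: sqrt_coeff_def inv_sqrt_coeff_def algebra_simps)
qed

lemma inv_sqrt_coeff_eq: "inv_sqrt_coeff n = pochhammer (1/2) n / fact n"
proof -
  have "inv_sqrt_coeff n = ((-1) ^ n * (-1) ^ n) * pochhammer (1/2) n / fact n"
    unfolding inv_sqrt_coeff_def gbinomial_pochhammer by simp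
  also have "(-1::real) ^ n * (-1) ^ n = 1" by (simp flip: power_add)
  finally show ?thesis by simp
qed

lemma inv_sqrt_coeff_pos: "inv_sqrt_coeff n > 0"
  unfolding inv_sqrt_coeff_eq by (intro divide_pos_pos pochhammer_pos) auto

lemma inv_sqrt_coeff_Suc_le: "inv_sqrt_coeff (Suc n) \<le> inv_sqrt_coeff n"
proof -
  have "inv_sqrt_coeff (Suc n) = inv_sqrt_coeff n * ((1/2 + real n) / real (Suc n))"
    by (simp add: inv_sqrt_coeff_eq pochhammer_Suc field_simps)
  also have "\<dots> \<le> inv_sqrt_coeff n * 1"
    using inv_sqrt_coeff_pos[of n] by (intro mult_left_mono) (auto simp: field_simps)
  finally show ?thesis by simp
qed

lemma summable_abs_sqrt_coeff: "summable (\<lambda>n. \<bar>sqrt_coeff n\<bar>)"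
proof -
  have "decseq inv_sqrt_coeff" by (rule decseq_SucI) (rule inv_sqrt_coeff_Suc_le)
  then obtain L where "inv_sqrt_coeff \<longlonglongrightarrow> L"
    using decseq_convergent[of inv_sqrt_coeff 0] inv_sqrt_coeff_pos less_imp_le by metis
  then have "summable (\<lambda>n. inv_sqrt_coeff n - inv_sqrt_coeff (Suc n))"
    by (rule telescope_summable')
  moreover have "\<bar>sqrt_coeff (Suc n)\<bar> = inv_sqrt_coeff n - inv_sqrt_coeff (Suc n)" for n
    using sqrt_coeff_Suc[of n] inv_sqrt_coeff_Suc_le[of n] by simp
  ultimately have "summable (\<lambda>n. \<bar>sqrt_coeff (Suc n)\<bar>)" by simp
  then show ?thesis using summable_Suc_iff[of "\<lambda>n. \<bar>sqrt_coeff n\<bar>"] by blast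
qed

lemma sqrt_coeff_Cauchy_square:
  "(\<Sum>i\<le>k. sqrt_coeff i * sqrt_coeff (k - i)) = (if k = 0 then 1 else if k = 1 then -1 else 0)"
proof -
  have "sqrt_coeff i * sqrt_coeff (k - i) = (-1) ^ k * (((1/2) gchoose i) * ((1/2) gchoose (k - i)))"
    if "i \<le> k" for i
  proof -
    have "(-1::real) ^ i * (-1) ^ (k - i) = (-1) ^ k" using that by (simp flip: power_add)
    then show ?thesis unfolding sqrt_coeff_def by (metis mult.assoc mult.left_commute)
  qed
  then have "(\<Sum>i\<le>k. sqrt_coeff i * sqrt_coeff (k - i))
      = (-1) ^ k * (\<Sum>i\<le>k. ((1/2::real) gchoose i) * ((1/2) gchoose (k - i)))"
    by (simp add: sum_distrib_left)
  also have "\<dots> = (-1) ^ k * ((1::real) gchoose k)"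
    using gbinomial_Vandermonde[of "1/2::real" "1/2" k] by (simp add: atLeast0AtMost)
  also have "\<dots> = (if k = 0 then 1 else if k = 1 then -1 else 0)"
  proof -
    have "real (1 choose k) = (of_nat 1 gchoose k)" by (rule binomial_gbinomial)
    then have "(1::real) gchoose k = of_nat (1 choose k)" by simp
    moreover have "k > 1 \<Longrightarrow> (1::nat) choose k = 0" by simp
    ultimately show ?thesis by (cases "k = 0"; cases "k = 1") auto
  qed
  finally show ?thesis .
qed

lemma bounded_linear_funpow:
  fixes C :: "'a::real_normed_vector \<Rightarrow> 'a"
  assumes "bounded_linear C"
  shows "bounded_linear (C ^^ n)"
proof (induction n)
  case 0
  have "C ^^ 0 = (\<lambda>x. x)" by (simp add: fun_eq_iff)
  then show ?case by (simp only: bounded_linear_ident)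
next
  case (Suc n)
  show ?case using bounded_linear_compose[OF assms Suc.IH] by (simp add: o_def)
qed

lemma summable_norm_sqrt_series:
  fixes P :: "nat \<Rightarrow> 'a::real_normed_vector"
  assumes "\<And>n. norm (P n) \<le> 1"
  shows "summable (\<lambda>n. norm (sqrt_coeff n *\<^sub>R P n))"
proof (rule summable_comparison_test'[OF summable_abs_sqrt_coeff])
  show "norm (norm (sqrt_coeff n *\<^sub>R P n)) \<le> \<bar>sqrt_coeff n\<bar>" for n
    using mult_left_mono[OF assms, of "\<bar>sqrt_coeff n\<bar>"] by simp
qed

lemma sqrt_series_square:
  fixes P :: "nat \<Rightarrow> 'a::banach \<Rightarrow>\<^sub>L 'a"
  assumes P_add: "\<And>i j. P i o\<^sub>L P j = P (i + j)" and P_bound: "\<And>n. norm (P n) \<le> 1"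
  shows "(\<Sum>n. sqrt_coeff n *\<^sub>R P n) o\<^sub>L (\<Sum>n. sqrt_coeff n *\<^sub>R P n) = P 0 - P 1"
proof -
  let ?c = "\<lambda>k. if k = 0 then 1 else if k = 1 then -1 else (0::real)"
  have "(\<lambda>k. \<Sum>i\<le>k. (sqrt_coeff i *\<^sub>R P i) o\<^sub>L (sqrt_coeff (k - i) *\<^sub>R P (k - i)))
      sums ((\<Sum>n. sqrt_coeff n *\<^sub>R P n) o\<^sub>L (\<Sum>n. sqrt_coeff n *\<^sub>R P n))"
    using summable_norm_sqrt_series[OF P_bound]
    by (intro bounded_bilinear_Cauchy_product_sums[OF bounded_bilinear_blinfun_compose])
  moreover have "(\<Sum>i\<le>k. (sqrt_coeff i *\<^sub>R P i) o\<^sub>L (sqrt_coeff (k - i) *\<^sub>R P (k - i))) = ?c k *\<^sub>R P k"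
    for k
  proof -
    have "(sqrt_coeff i *\<^sub>R P i) o\<^sub>L (sqrt_coeff (k - i) *\<^sub>R P (k - i))
        = (sqrt_coeff i * sqrt_coeff (k - i)) *\<^sub>R P k" if "i \<le> k" for i
      using P_add[of i "k - i"] that
      by (simp add: bounded_bilinear.scaleR_left[OF bounded_bilinear_blinfun_compose]
          bounded_bilinear.scaleR_right[OF bounded_bilinear_blinfun_compose] mult.commute)
    then show ?thesis by (simp add: sqrt_coeff_Cauchy_square flip: scaleR_sum_left)
  qed
  moreover have "(\<lambda>k. ?c k *\<^sub>R P k) sums (P 0 - P 1)"
    using sums_finite[of "{0, 1}" "\<lambda>k. ?c k *\<^sub>R P k"] by simp
  ultimately show ?thesis using sums_unique2 by simp
qed

text \<open>The square root is the binomial series \<open>\<Sum>n. sqrt_coeff n *\<^sub>R C ^^ n\<close>, which converges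
  absolutely in operator norm because \<open>C\<close> is a contraction.\<close>

lemma exists_sqrt_id_minus_contraction:
  fixes C :: "'a::chilbert_space \<Rightarrow> 'a"
  assumes C: "bounded_linear C" and C_selfadjoint: "\<And>x y. cinner (C x) y = cinner x (C y)"
    and C_contraction: "\<And>x. norm (C x) \<le> norm x"
  obtains A where "bounded_linear A" and "\<And>x y. cinner (A x) y = cinner x (A y)"
    and "\<And>x. A (A x) = x - C x"
    and "\<And>T x. bounded_linear T \<Longrightarrow> (\<And>y. T (C y) = C (T y)) \<Longrightarrow> T (A x) = A (T x)"
proof -
  define Cpow where "Cpow n = Blinfun (C ^^ n)" for n
  have Cpow_apply: "blinfun_apply (Cpow n) = C ^^ n" for n
    unfolding Cpow_def by (rule bounded_linear_Blinfun_apply[OF bounded_linear_funpow[OF C]])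
  have "norm ((C ^^ n) x) \<le> norm x" for n x
    by (induction n) (auto intro: order_trans[OF C_contraction])
  then have norm_Cpow: "norm (Cpow n) \<le> 1" for n
    by (intro norm_blinfun_bound) (simp_all add: Cpow_apply)
  have "Cpow i o\<^sub>L Cpow j = Cpow (i + j)" for i j
    by (rule blinfun_eqI) (simp add: Cpow_apply funpow_add)
  then have A_square_blinfun:
    "(\<Sum>n. sqrt_coeff n *\<^sub>R Cpow n) o\<^sub>L (\<Sum>n. sqrt_coeff n *\<^sub>R Cpow n) = Cpow 0 - Cpow 1"
    using norm_Cpow by (rule sqrt_series_square)
  define A where "A x = (\<Sum>n. sqrt_coeff n *\<^sub>R (C ^^ n) x)" for x
  have summable: "summable (\<lambda>n. sqrt_coeff n *\<^sub>R Cpow n)"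
    using summable_norm_sqrt_series[OF norm_Cpow] by (rule summable_norm_cancel)
  have A_blinfun: "blinfun_apply (\<Sum>n. sqrt_coeff n *\<^sub>R Cpow n) = A"
    and summable_apply: "summable (\<lambda>n. sqrt_coeff n *\<^sub>R (C ^^ n) x)" for x
    using bounded_linear.suminf[OF blinfun.bounded_linear_left summable]
      bounded_linear.summable[OF blinfun.bounded_linear_left[of x] summable]
    by (simp_all add: A_def fun_eq_iff Cpow_apply blinfun.scaleR_left)
  have "bounded_linear A"
    unfolding A_blinfun[symmetric] by (rule blinfun.bounded_linear_right)
  moreover have "A (A x) = x - C x" for x
    using arg_cong[OF A_square_blinfun, of "\<lambda>F. blinfun_apply F x"]
    by (simp add: A_blinfun blinfun.diff_left Cpow_apply)
  moreover have "cinner (A x) y = cinner x (A y)" for x y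
  proof -
    have Cpow_selfadjoint: "cinner ((C ^^ n) x) y = cinner x ((C ^^ n) y)" for n x y
      by (induction n arbitrary: x y) (simp_all add: C_selfadjoint funpow_swap1)
    have "cinner (A x) y = (\<Sum>n. cinner (sqrt_coeff n *\<^sub>R (C ^^ n) x) y)"
      unfolding A_def by (rule bounded_linear.suminf[OF bounded_linear_cinner_left summable_apply])
    also have "\<dots> = (\<Sum>n. cinner x (sqrt_coeff n *\<^sub>R (C ^^ n) y))"
      by (simp add: cinner_scaleR_left cinner_scaleR_right Cpow_selfadjoint)
    also have "\<dots> = cinner x (A y)"
      unfolding A_def by (rule bounded_linear.suminf[OF bounded_linear_cinner_right summable_apply, symmetric])
    finally show ?thesis .
  qed
  moreover have "T (A x) = A (T x)"
    if T: "bounded_linear T" and TC: "\<And>y. T (C y) = C (T y)" for T x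
  proof -
    have TCpow: "T ((C ^^ n) y) = (C ^^ n) (T y)" for n y
      by (induction n) (simp_all add: TC)
    have "T (A x) = (\<Sum>n. T (sqrt_coeff n *\<^sub>R (C ^^ n) x))"
      unfolding A_def by (rule bounded_linear.suminf[OF T summable_apply])
    also have "\<dots> = A (T x)"
      using T by (simp add: A_def linear_simps TCpow)
    finally show ?thesis .
  qed
  ultimately show ?thesis using that by blast
qed

lemma norm_id_minus_square_le:
  fixes B :: "'a::chilbert_space \<Rightarrow> 'a"
  assumes B: "selfadjoint B" and K: "\<And>x. norm (B x) \<le> norm x * K" and "K > 0"
  shows "norm (x - (1 / K\<^sup>2) *\<^sub>R B (B x)) \<le> norm x"
proof -
  define c where "c = K\<^sup>2"
  have "c > 0" using \<open>K > 0\<close> by (simp add: c_def)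
  have "(norm (B (B x)))\<^sup>2 \<le> c * (norm (B x))\<^sup>2"
    using power_mono[OF K[of "B x"] norm_ge_zero, of 2] by (simp add: c_def power_mult_distrib mult.commute)
  then have "(1 / c)\<^sup>2 * (norm (B (B x)))\<^sup>2 \<le> (1 / c)\<^sup>2 * (c * (norm (B x))\<^sup>2)"
    by (rule mult_left_mono) simp
  also have "\<dots> = (1 / c) * (norm (B x))\<^sup>2"
    using \<open>c > 0\<close> by (simp add: power2_eq_square field_simps)
  finally have BB: "(1 / c)\<^sup>2 * (norm (B (B x)))\<^sup>2 \<le> (1 / c) * (norm (B x))\<^sup>2" .
  have "Re (cinner x (B (B x))) = (norm (B x))\<^sup>2"
    by (simp add: norm_sq_eq_Re_cinner selfadjoint_cinner[OF B])
  moreover have "(norm ((1 / c) *\<^sub>R B (B x)))\<^sup>2 = (1 / c)\<^sup>2 * (norm (B (B x)))\<^sup>2"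
    by (simp only: norm_scaleR power_mult_distrib power2_abs)
  ultimately have "(norm (x - (1 / c) *\<^sub>R B (B x)))\<^sup>2
      = (norm x)\<^sup>2 - 2 * ((1 / c) * (norm (B x))\<^sup>2) + (1 / c)\<^sup>2 * (norm (B (B x)))\<^sup>2"
    by (simp add: norm_diff_sq cinner_scaleR_right)
  also have "\<dots> \<le> (norm x)\<^sup>2"
  proof -
    have "0 \<le> (1 / c) * (norm (B x))\<^sup>2" using \<open>c > 0\<close> by simp
    then show ?thesis using BB by linarith
  qed
  finally show ?thesis unfolding c_def by (rule power2_le_imp_le) simp
qed

lemma exists_sqrt_of_square:
  fixes B :: "'a::chilbert_space \<Rightarrow> 'a"
  assumes B: "selfadjoint B"
  obtains R where "selfadjoint R" and "\<And>x. R (R x) = B (B x)"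
    and "\<And>T x. bounded_linear T \<Longrightarrow> (\<And>y. T (B (B y)) = B (B (T y))) \<Longrightarrow> T (R x) = R (T x)"
proof -
  have B_linear: "bounded_linear B"
    using B by (simp add: selfadjoint_def bounded_clinear_bounded_linear)
  obtain K where "K > 0" and K: "\<And>x. norm (B x) \<le> norm x * K"
    using bounded_linear.pos_bounded[OF B_linear] by blast
  define c where "c = K\<^sup>2"
  have "c > 0" using \<open>K > 0\<close> by (simp add: c_def)
  define C where "C x = x - (1 / c) *\<^sub>R B (B x)" for x
  have C_linear: "bounded_linear C"
    unfolding C_def
    by (intro bounded_linear_sub bounded_linear_ident bounded_linear_compose[OF bounded_linear_scaleR_right]
        bounded_linear_compose[OF B_linear B_linear])
  have C_selfadjoint: "cinner (C x) y = cinner x (C y)" for x y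
    by (simp add: C_def cinner_diff_left cinner_diff_right cinner_scaleR_left cinner_scaleR_right
        selfadjoint_cinner[OF B])
  have C_contraction: "norm (C x) \<le> norm x" for x
    unfolding C_def c_def using B K \<open>K > 0\<close> by (rule norm_id_minus_square_le)
  obtain A where A: "bounded_linear A" and A_selfadjoint: "\<And>x y. cinner (A x) y = cinner x (A y)"
    and A_square: "\<And>x. A (A x) = x - C x"
    and A_commute: "\<And>T x. bounded_linear T \<Longrightarrow> (\<And>y. T (C y) = C (T y)) \<Longrightarrow> T (A x) = A (T x)"
    using exists_sqrt_id_minus_contraction[OF C_linear C_selfadjoint C_contraction] by blast
  define R where "R x = sqrt c *\<^sub>R A x" for x
  have R_commute: "T (R x) = R (T x)"
    if T: "bounded_linear T" and TB: "\<And>y. T (B (B y)) = B (B (T y))" for T x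
    using A_commute[OF T] T TB by (simp add: R_def C_def linear_simps)
  have "R (c' *\<^sub>C x) = c' *\<^sub>C R x" for c' x
    using R_commute[OF bounded_linear_scaleC, of c'] B
    by (simp add: selfadjoint_def clinear_scaleC)
  moreover have "bounded_linear R"
    unfolding R_def by (intro bounded_linear_compose[OF bounded_linear_scaleR_right A])
  ultimately have "selfadjoint R"
    by (simp add: selfadjoint_def bounded_clinear_def R_def cinner_scaleR_left cinner_scaleR_right A_selfadjoint)
  moreover have "R (R x) = B (B x)" for x
    using \<open>c > 0\<close> A by (simp add: R_def A_square C_def linear_simps)
  ultimately show ?thesis using that R_commute by blast
qed

section \<open>The sign of a selfadjoint operator\<close>

lemma selfadjoint_apply_in_orth_compl_vimage_0:
  "selfadjoint X \<Longrightarrow> X y \<in> orth_compl (X -` {0})"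
  by (simp add: orth_compl_def selfadjoint_cinner[symmetric])

lemma orth_compl_vimage_0_subset:
  assumes X: "selfadjoint X" and Y: "bounded_clinear Y" and YX: "\<And>x. Y (X x) = 0"
  shows "orth_compl (X -` {0}) \<subseteq> Y -` {0}"
proof -
  have "range X \<subseteq> Y -` {0}" using YX by auto
  then have "orth_compl (orth_compl (range X)) \<subseteq> orth_compl (orth_compl (Y -` {0}))"
    by (intro orth_compl_antimono)
  then show ?thesis
    by (simp add: orth_compl_orth_compl closed_vimage_0[OF Y] csubspace_vimage_0[OF Y]
        selfadjoint_vimage_0[OF X])
qed

lemma eq_if_eq_on_range_and_vimage_0:
  fixes F G R :: "'a::chilbert_space \<Rightarrow> 'a"
  assumes R: "selfadjoint R" and F: "bounded_clinear F" and G: "bounded_clinear G"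
    and on_range: "\<And>z. F (R z) = G (R z)" and on_kernel: "\<And>y. R y = 0 \<Longrightarrow> F y = G y"
  shows "F x = G x"
proof -
  define E where "E = (\<lambda>y. F y - G y) -` {0}"
  have FG: "bounded_clinear (\<lambda>y. F y - G y)" using F G by (rule bounded_clinear_sub)
  have closed_R: "closed (R -` {0})" and subspace_R: "csubspace (R -` {0})"
    using R by (simp_all add: selfadjoint_def closed_vimage_0 csubspace_vimage_0)
  have "orth_compl (R -` {0}) \<subseteq> E"
    unfolding E_def using on_range by (intro orth_compl_vimage_0_subset[OF R FG]) simp
  then have "x - orth_proj (R -` {0}) x \<in> E"
    using orth_proj_residual[OF closed_R subspace_R] by blast
  moreover have "orth_proj (R -` {0}) x \<in> E"
    using orth_proj_in[OF closed_R subspace_R, of x] on_kernel by (simp add: E_def)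
  ultimately have "x \<in> E"
    using csubspace_add[OF csubspace_vimage_0[OF FG]] unfolding E_def by fastforce
  then show ?thesis by (simp add: E_def)
qed

lemma vimage_0_eq_if_square_eq:
  assumes "selfadjoint R" and "selfadjoint B" and "\<And>x. R (R x) = B (B x)"
  shows "R -` {0} = B -` {0}"
proof -
  have "cinner (R x) (R x) = cinner (B x) (B x)" for x
    using assms by (simp add: selfadjoint_cinner)
  then show ?thesis by (auto simp: cinner_eq_zero_iff[symmetric])
qed

text \<open>The orthogonal complement of the kernel of a selfadjoint operator is the closure of its range,
  so \<open>Vp\<close> and \<open>Vm\<close> are the closures of the ranges of \<open>R + B\<close> and \<open>R - B\<close>.\<close>

lemma sqrt_spectral_decomposition:
  fixes B R :: "'a::chilbert_space \<Rightarrow> 'a"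
  assumes B: "selfadjoint B" and R: "selfadjoint R"
    and RR: "\<And>x. R (R x) = B (B x)" and RB: "\<And>x. R (B x) = B (R x)"
  defines "Vp \<equiv> orth_compl ((\<lambda>x. R x + B x) -` {0})" and "Vm \<equiv> orth_compl ((\<lambda>x. R x - B x) -` {0})"
  shows "Vp \<subseteq> orth_compl Vm" and "R -` {0} \<subseteq> orth_compl Vp" and "R -` {0} \<subseteq> orth_compl Vm"
    and "orth_proj Vp x + orth_proj Vm x + orth_proj (R -` {0}) x = x"
    and "orth_proj Vp (R x + B x) = R x + B x" and "orth_proj Vp (R x - B x) = 0"
    and "orth_proj Vm (R x - B x) = R x - B x" and "orth_proj Vm (R x + B x) = 0"
proof -
  define Bp where "Bp x = R x + B x" for x
  define Bm where "Bm x = R x - B x" for x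
  have Bp: "selfadjoint Bp" and Bm: "selfadjoint Bm"
    unfolding Bp_def Bm_def using R B by (simp_all add: selfadjoint_add selfadjoint_diff)
  have [simp]: "bounded_clinear B" "bounded_clinear R" "bounded_clinear Bp" "bounded_clinear Bm"
    using B R Bp Bm by (simp_all add: selfadjoint_def)
  have BpBm: "Bp (Bm x) = 0" and BmBp: "Bm (Bp x) = 0" for x
    by (simp_all add: Bp_def Bm_def clinear_add clinear_diff RR RB)
  have Vp: "Vp = orth_compl (Bp -` {0})" and Vm: "Vm = orth_compl (Bm -` {0})"
    by (simp_all add: Vp_def Vm_def Bp_def[abs_def] Bm_def[abs_def])
  define K where "K = R -` {0}"
  have closed: "closed Vp" "closed Vm" "closed K"
    and subspace: "csubspace Vp" "csubspace Vm" "csubspace K"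
    by (simp_all add: Vp Vm K_def closed_orth_compl csubspace_orth_compl closed_vimage_0
        csubspace_vimage_0)
  have orth_Vp: "orth_compl Vp = Bp -` {0}" and orth_Vm: "orth_compl Vm = Bm -` {0}"
    by (simp_all add: Vp Vm orth_compl_orth_compl closed_vimage_0 csubspace_vimage_0)
  show "Vp \<subseteq> orth_compl Vm"
    unfolding orth_Vm Vp using BmBp by (intro orth_compl_vimage_0_subset[OF Bp]) simp_all
  show "K \<subseteq> orth_compl Vp" and "K \<subseteq> orth_compl Vm"
    using vimage_0_eq_if_square_eq[OF R B RR] by (auto simp: K_def orth_Vp orth_Vm Bp_def Bm_def)
  moreover have "orth_compl Vp \<inter> orth_compl Vm \<inter> orth_compl K \<subseteq> {0}"
  proof
    fix x
    assume x: "x \<in> orth_compl Vp \<inter> orth_compl Vm \<inter> orth_compl K"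
    then have "R x + B x = 0" and "R x - B x = 0" by (auto simp: orth_Vp orth_Vm Bp_def Bm_def)
    then have "(2::real) *\<^sub>R R x = 0" by (simp add: scaleR_2)
    then show "x \<in> {0}" using x orth_compl_disjoint[of x K] by (simp add: K_def)
  qed
  moreover have "Vp \<subseteq> orth_compl K" and "Vm \<subseteq> orth_compl K"
    using calculation(1,2) orth_compl_sym[of Vp K] orth_compl_sym[of Vm K] by blast+
  ultimately show "orth_proj Vp x + orth_proj Vm x + orth_proj K x = x"
    using closed subspace \<open>Vp \<subseteq> orth_compl Vm\<close> by (intro orth_proj_sum_eq_id)
  show "orth_proj Vp (R x + B x) = R x + B x" and "orth_proj Vm (R x - B x) = R x - B x"
    using selfadjoint_apply_in_orth_compl_vimage_0[OF Bp] selfadjoint_apply_in_orth_compl_vimage_0[OF Bm]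
      closed subspace by (simp_all add: Vp Vm orth_proj_id Bp_def Bm_def)
  show "orth_proj Vp (R x - B x) = 0" and "orth_proj Vm (R x + B x) = 0"
    using BpBm BmBp closed subspace by (simp_all add: orth_proj_eq_0 orth_Vp orth_Vm Bp_def Bm_def)
qed

lemma sign_decomposition:
  fixes B R :: "'a::chilbert_space \<Rightarrow> 'a"
  assumes B: "selfadjoint B" and R: "selfadjoint R"
    and RR: "\<And>x. R (R x) = B (B x)" and RB: "\<And>x. R (B x) = B (R x)"
  obtains S where "selfadjoint S" and "\<And>x. S (S x) + orth_proj (R -` {0}) x = x"
    and "\<And>x. S (orth_proj (R -` {0}) x) = 0" and "\<And>x. S (R x) = B x"
proof -
  define Vp where "Vp = orth_compl ((\<lambda>x. R x + B x) -` {0})"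
  define Vm where "Vm = orth_compl ((\<lambda>x. R x - B x) -` {0})"
  define K where "K = R -` {0}"
  note decomposition = sqrt_spectral_decomposition[of B R, OF B R RR RB, folded Vp_def Vm_def K_def]
  have [simp]: "bounded_clinear R" "bounded_clinear B" using R B by (simp_all add: selfadjoint_def)
  have closed: "closed Vp" "closed Vm" "closed K" and subspace: "csubspace Vp" "csubspace Vm" "csubspace K"
    by (simp_all add: Vp_def Vm_def K_def closed_orth_compl csubspace_orth_compl closed_vimage_0
        csubspace_vimage_0)
  define S where "S x = orth_proj Vp x - orth_proj Vm x" for x
  have S: "selfadjoint S"
    unfolding S_def using closed subspace by (intro selfadjoint_diff selfadjoint_orth_proj)
  moreover have "S (S x) + orth_proj K x = x" for x
  proof -
    have "Vm \<subseteq> orth_compl Vp" using decomposition(1) orth_compl_sym by blast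
    then have "orth_proj Vp (orth_proj Vm x) = 0" and "orth_proj Vm (orth_proj Vp x) = 0"
      using decomposition(1) orth_proj_in[OF closed(1) subspace(1)] orth_proj_in[OF closed(2) subspace(2)]
      by (simp_all add: orth_proj_eq_0 closed subspace subset_iff)
    then show ?thesis
      using decomposition(4)[of x] closed subspace
      by (simp add: S_def clinear_diff bounded_clinear_orth_proj orth_proj_idem)
  qed
  moreover have "S (orth_proj K x) = 0" for x
    using decomposition(2,3) orth_proj_in[OF closed(3) subspace(3)] closed subspace
    by (simp add: S_def orth_proj_eq_0 subset_iff)
  moreover have "S (R x) = B x" for x
  proof -
    have S_clinear: "bounded_clinear S" using S by (rule selfadjoint_bounded_clinear)
    have "(2::real) *\<^sub>R S (R x) = S ((R x + B x) + (R x - B x))"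
      by (simp add: clinear_scaleR[OF S_clinear, symmetric] scaleR_2)
    also have "\<dots> = (R x + B x) - (R x - B x)"
      unfolding clinear_add[OF S_clinear, of "R x + B x" "R x - B x"]
      by (simp add: S_def decomposition(5-8))
    also have "\<dots> = (2::real) *\<^sub>R B x" by (simp add: scaleR_2)
    finally show ?thesis by simp
  qed
  ultimately show ?thesis using that unfolding K_def by blast
qed

lemma exists_sign_of_selfadjoint:
  fixes B :: "'a::chilbert_space \<Rightarrow> 'a"
  assumes B: "selfadjoint B"
  obtains S where "selfadjoint S"
    and "\<And>x. S (S x) + orth_proj (B -` {0}) x = x"
    and "\<And>x. S (orth_proj (B -` {0}) x) = 0"
    and "\<And>V V' x. bounded_clinear V \<Longrightarrow> bounded_clinear V' \<Longrightarrow> (\<And>y. B (V y) = V' (B y)) \<Longrightarrow>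
      (\<And>y. V (B (B y)) = B (B (V y))) \<Longrightarrow> S (V x) = V' (S x)"
proof -
  have B_clinear: "bounded_clinear B" using B by (simp add: selfadjoint_def)
  obtain R where R: "selfadjoint R" and RR: "\<And>x. R (R x) = B (B x)"
    and R_commute: "\<And>T x. bounded_linear T \<Longrightarrow> (\<And>y. T (B (B y)) = B (B (T y))) \<Longrightarrow> T (R x) = R (T x)"
    using exists_sqrt_of_square[OF B] by blast
  have RB: "R (B x) = B (R x)" for x
    using R_commute[OF bounded_clinear_bounded_linear[OF B_clinear]] by simp
  have kernel: "R -` {0} = B -` {0}" by (rule vimage_0_eq_if_square_eq[OF R B RR])
  obtain S where S: "selfadjoint S" and SS: "\<And>x. S (S x) + orth_proj (R -` {0}) x = x"
    and S_kernel: "\<And>x. S (orth_proj (R -` {0}) x) = 0" and SR: "\<And>x. S (R x) = B x"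
    using sign_decomposition[of B R, OF B R RR RB] by blast
  have S_clinear: "bounded_clinear S" using S by (simp add: selfadjoint_def)
  have S_0: "S y = 0" if "B y = 0" for y
    using S_kernel[of y] that B_clinear
    by (simp add: kernel orth_proj_id closed_vimage_0 csubspace_vimage_0)
  have intertwining: "S (V x) = V' (S x)"
    if V: "bounded_clinear V" and V': "bounded_clinear V'" and BV: "\<And>y. B (V y) = V' (B y)"
      and BBV: "\<And>y. V (B (B y)) = B (B (V y))" for V V' x
  proof (rule eq_if_eq_on_range_and_vimage_0[OF R, where F = "\<lambda>x. S (V x)" and G = "\<lambda>x. V' (S x)"])
    show "bounded_clinear (\<lambda>x. S (V x))" and "bounded_clinear (\<lambda>x. V' (S x))"
      using S_clinear V V' by (simp_all add: bounded_clinear_compose)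
    show "S (V (R z)) = V' (S (R z))" for z
      using R_commute[of V, OF bounded_clinear_bounded_linear[OF V] BBV] by (simp add: SR BV)
    show "S (V y) = V' (S y)" if "R y = 0" for y
    proof -
      have "B y = 0" using that kernel by blast
      then have "B (V y) = 0" using BV[of y] by (simp add: clinear_zero[OF V'])
      then show ?thesis using S_0 \<open>B y = 0\<close> by (simp add: clinear_zero[OF V'])
    qed
  qed
  show ?thesis
    using that[of S] S SS[unfolded kernel] S_kernel[unfolded kernel] intertwining by blast
qed

section \<open>Symmetries and unitary equivalence to the adjoint\<close>

lemma symmetryD:
  assumes "symmetry Z"
  shows "bounded_clinear Z" and "adj Z = Z" and "Z (Z x) = x"
  using assms by (auto simp: symmetry_def unitary_def fun_eq_iff)

lemma symmetryI:
  assumes "selfadjoint Z" and "\<And>x. Z (Z x) = x"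
  shows "symmetry Z"
  using assms by (simp add: symmetry_def unitary_def selfadjoint_adj selfadjoint_bounded_clinear fun_eq_iff)

lemma adj_product_of_symmetries:
  assumes "symmetry S1" and "symmetry S2"
  shows "adj (S1 \<circ> S2) = adj S1 \<circ> (S1 \<circ> S2) \<circ> S1"
  using symmetryD[OF assms(1)] symmetryD[OF assms(2)]
  by (simp add: adj_comp fun_eq_iff)

lemma symmetry_comp_intertwining:
  assumes Z: "symmetry Z" and U: "unitary U" and ZU: "Z \<circ> U = adj U \<circ> Z"
  shows "symmetry (Z \<circ> U)"
proof -
  have "bounded_clinear (Z \<circ> U)"
    by (intro bounded_clinear_comp symmetryD(1)[OF Z] unitaryD(1)[OF U])
  moreover have "adj (Z \<circ> U) = Z \<circ> U"
  proof -
    have "adj (Z \<circ> U) = adj U \<circ> adj Z"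
      by (rule adj_comp[OF symmetryD(1)[OF Z] unitaryD(1)[OF U]])
    then show ?thesis using ZU symmetryD(2)[OF Z] by simp
  qed
  moreover have "Z (U (Z (U x))) = x" for x
    using fun_cong[OF ZU, of "Z (U x)"] symmetryD(3)[OF Z] unitaryD(2)[OF U] by simp
  ultimately show ?thesis by (simp add: symmetry_def unitary_def fun_eq_iff)
qed

lemma adjoint_similarity_intertwines:
  fixes U W :: "'a::chilbert_space \<Rightarrow> 'a"
  assumes U: "unitary U" and W: "unitary W" and UW: "adj U = adj W \<circ> U \<circ> W"
  shows "W (U x) = adj U (W x)" and "adj W (U x) = adj U (adj W x)"
proof -
  have W'U: "adj W \<circ> U = adj U \<circ> adj W"
    using UW unitaryD(3)[OF W] by (simp add: fun_eq_iff)
  then show "adj W (U x) = adj U (adj W x)" by (simp add: fun_eq_iff)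
  have "adj (adj W \<circ> U) = adj (adj U \<circ> adj W)" using W'U by simp
  then have "adj U \<circ> W = W \<circ> U"
    using unitaryD(1)[OF U] unitaryD(1)[OF W]
    by (simp add: adj_comp bounded_clinear_adj adj_adj)
  then show "W (U x) = adj U (W x)" by (simp add: fun_eq_iff)
qed

lemma adjoint_similarity_real_part:
  fixes U W :: "'a::chilbert_space \<Rightarrow> 'a"
  assumes U: "unitary U" and W: "unitary W" and UW: "adj U = adj W \<circ> U \<circ> W"
  defines "B \<equiv> \<lambda>x. W x + adj W x"
  shows "selfadjoint B" and "B (U x) = adj U (B x)" and "U (B x) = B (adj U x)"
proof -
  have W_clinear: "bounded_clinear W" by (rule unitaryD(1)[OF W])
  then show "selfadjoint B"
    by (simp add: B_def selfadjoint_def bounded_clinear_add bounded_clinear_adj cinner_add_left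
        cinner_add_right cinner_adj_right cinner_adj_left adj_adj)
  have BU: "B (U y) = adj U (B y)" for y
    using adjoint_similarity_intertwines[OF U W UW] bounded_clinear_adj[OF unitaryD(1)[OF U]]
    by (simp add: B_def clinear_add)
  then show "B (U x) = adj U (B x)" .
  show "U (B x) = B (adj U x)"
    using BU[of "adj U x"] unitaryD(3)[OF U] by simp
qed

lemma commute_real_part:
  assumes "bounded_clinear T" and "T \<circ> W = W \<circ> T" and "T \<circ> adj W = adj W \<circ> T"
  shows "W (T x) + adj W (T x) = T (W x + adj W x)"
  using assms by (simp add: clinear_add fun_eq_iff)

lemma adjoint_similarity_kernel_projection:
  fixes U W :: "'a::chilbert_space \<Rightarrow> 'a"
  assumes U: "unitary U" and W: "unitary W" and UW: "adj U = adj W \<circ> U \<circ> W"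
  defines "P \<equiv> orth_proj ((\<lambda>x. W x + adj W x) -` {0})"
  shows "adj W (P x) = - W (P x)" and "P (U x) = U (P x)"
    and "\<And>T. bounded_clinear T \<Longrightarrow> T \<circ> W = W \<circ> T \<Longrightarrow> T \<circ> adj W = adj W \<circ> T \<Longrightarrow> P (T x) = T (P x)"
proof -
  define B where "B = (\<lambda>x. W x + adj W x)"
  have B: "selfadjoint B" and BU: "\<And>x. B (U x) = adj U (B x)" and UB: "\<And>x. U (B x) = B (adj U x)"
    using adjoint_similarity_real_part[OF U W UW] unfolding B_def by simp_all
  have B_clinear: "bounded_clinear B" using B by (rule selfadjoint_bounded_clinear)
  have [simp]: "bounded_clinear W" "bounded_clinear U"
    using unitaryD(1)[OF W] unitaryD(1)[OF U] by simp_all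
  have P: "P = orth_proj (B -` {0})" by (simp add: P_def B_def)
  have P_commute: "T (P x) = P (T x)"
    if "bounded_clinear T" "\<And>y. B y = 0 \<Longrightarrow> B (T y) = 0" "\<And>y. B y = 0 \<Longrightarrow> B (adj T y) = 0" for T
    unfolding P using B_clinear that by (intro orth_proj_vimage_0_commute) simp_all
  show "adj W (P x) = - W (P x)"
    using orth_proj_in[OF closed_vimage_0[OF B_clinear] csubspace_vimage_0[OF B_clinear], of x]
    by (simp add: P B_def add.commute eq_neg_iff_add_eq_0)
  show "P (U x) = U (P x)"
    using P_commute[of U] BU UB B_clinear by (simp add: clinear_zero bounded_clinear_adj flip: UB)
  show "P (T x) = T (P x)"
    if T: "bounded_clinear T" "T \<circ> W = W \<circ> T" "T \<circ> adj W = adj W \<circ> T" for T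
  proof -
    have "adj T \<circ> W = W \<circ> adj T" and "adj T \<circ> adj W = adj W \<circ> adj T"
      using adj_commute[of T W] adj_commute[of T "adj W"] T by (simp_all add: bounded_clinear_adj adj_adj)
    then show ?thesis
      using T commute_real_part[OF T] commute_real_part[of "adj T"]
      by (intro P_commute[symmetric]) (simp_all add: B_def bounded_clinear_adj clinear_zero)
  qed
qed

lemma symmetry_sign_plus_skew_part:
  fixes S P W :: "'a::chilbert_space \<Rightarrow> 'a"
  assumes S: "selfadjoint S" and P: "selfadjoint P" and W: "unitary W"
    and SS: "\<And>x. S (S x) + P x = x" and SP: "\<And>x. S (P x) = 0" and PP: "\<And>x. P (P x) = P x"
    and SW: "\<And>x. S (W x) = W (S x)" and PW: "\<And>x. P (W x) = W (P x)"
    and PW': "\<And>x. P (adj W x) = adj W (P x)" and skew: "\<And>x. adj W (P x) = - W (P x)"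
  shows "symmetry (\<lambda>x. S x + \<i> *\<^sub>C W (P x))"
proof (rule symmetryI)
  note [simp] = selfadjoint_bounded_clinear[OF S] selfadjoint_bounded_clinear[OF P] unitaryD(1)[OF W]
  have PS: "P (S x) = 0" for x
    by (rule cinner_ext_left) (simp add: selfadjoint_cinner[OF P] selfadjoint_cinner[OF S] SP)
  have "cinner (W (P x)) y = - cinner x (W (P y))" for x y
    by (simp add: cinner_adj_right selfadjoint_cinner[OF P] PW' skew cinner_minus_right)
  then show "selfadjoint (\<lambda>x. S x + \<i> *\<^sub>C W (P x))"
    by (simp add: selfadjoint_def bounded_clinear_add bounded_clinear_scaleC bounded_clinear_compose
        cinner_add_left cinner_add_right cinner_scaleC_left cinner_scaleC_right selfadjoint_cinner[OF S])
  have "W (W (P x)) = - P x" for x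
    using unitaryD(3)[OF W, of "P x"] by (simp add: skew clinear_minus minus_equation_iff)
  then show "S (S x + \<i> *\<^sub>C W (P x)) + \<i> *\<^sub>C W (P (S x + \<i> *\<^sub>C W (P x))) = x" for x
    using SS[of x]
    by (simp add: clinear_add clinear_scaleC clinear_zero SW SP PS PW PP scaleC_scaleC clinear_minus
        scaleC_minus_left scaleC_minus_right scaleC_one)
qed

lemma exists_symmetry_intertwining_adjoint:
  fixes U W :: "'a::chilbert_space \<Rightarrow> 'a"
  assumes U: "unitary U" and W: "unitary W" and UW: "adj U = adj W \<circ> U \<circ> W"
  obtains Z where "symmetry Z" and "Z \<circ> U = adj U \<circ> Z"
    and "\<And>T. bounded_clinear T \<Longrightarrow> T \<circ> W = W \<circ> T \<Longrightarrow> T \<circ> adj W = adj W \<circ> T \<Longrightarrow> T \<circ> Z = Z \<circ> T"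
proof -
  have [simp]: "bounded_clinear U" "bounded_clinear W" "bounded_clinear (adj U)" "bounded_clinear (adj W)"
    using unitaryD(1)[OF U] unitaryD(1)[OF W] by (simp_all add: bounded_clinear_adj)
  have W_W': "W \<circ> adj W = adj W \<circ> W"
    using unitaryD(2,3)[OF W] by (simp add: fun_eq_iff)
  define B where "B = (\<lambda>x. W x + adj W x)"
  have B: "selfadjoint B" and BU: "\<And>x. B (U x) = adj U (B x)" and UB: "\<And>x. U (B x) = B (adj U x)"
    using adjoint_similarity_real_part[OF U W UW] unfolding B_def by simp_all
  have B_clinear: "bounded_clinear B" using B by (rule selfadjoint_bounded_clinear)
  define P where "P = orth_proj (B -` {0})"
  note P_facts = adjoint_similarity_kernel_projection[OF U W UW, folded B_def P_def]
  obtain S where S: "selfadjoint S" and SS: "\<And>x. S (S x) + P x = x" and SP: "\<And>x. S (P x) = 0"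
    and S_intertwining: "\<And>V V' x. bounded_clinear V \<Longrightarrow> bounded_clinear V' \<Longrightarrow> (\<And>y. B (V y) = V' (B y)) \<Longrightarrow>
      (\<And>y. V (B (B y)) = B (B (V y))) \<Longrightarrow> S (V x) = V' (S x)"
    using exists_sign_of_selfadjoint[OF B] unfolding P_def by blast
  have commute_S: "S (T x) = T (S x)"
    if "bounded_clinear T" "T \<circ> W = W \<circ> T" "T \<circ> adj W = adj W \<circ> T" for T x
    using that commute_real_part[OF that] by (intro S_intertwining) (simp_all add: B_def)
  define Z where "Z x = S x + \<i> *\<^sub>C W (P x)" for x
  have "symmetry Z"
    unfolding Z_def
  proof (rule symmetry_sign_plus_skew_part[OF S _ W SS SP])
    show "selfadjoint P" and "P (P x) = P x" for x
      using closed_vimage_0[OF B_clinear] csubspace_vimage_0[OF B_clinear]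
      by (simp_all add: P_def selfadjoint_orth_proj orth_proj_idem)
    show "S (W x) = W (S x)" and "P (W x) = W (P x)" and "P (adj W x) = adj W (P x)"
      and "adj W (P x) = - W (P x)" for x
      using commute_S[of W] P_facts(3)[of W] P_facts(3)[of "adj W"] P_facts(1) W_W' by simp_all
  qed
  moreover have "Z \<circ> U = adj U \<circ> Z"
  proof -
    have "S (U x) = adj U (S x)" for x
      by (intro S_intertwining) (simp_all add: BU UB B_clinear)
    then show ?thesis
      using adjoint_similarity_intertwines(1)[OF U W UW] P_facts(2)
      by (simp add: Z_def fun_eq_iff clinear_add clinear_scaleC)
  qed
  moreover have "T \<circ> Z = Z \<circ> T"
    if "bounded_clinear T" "T \<circ> W = W \<circ> T" "T \<circ> adj W = adj W \<circ> T" for T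
    using that commute_S[OF that] P_facts(3)[OF that]
    by (simp add: Z_def fun_eq_iff clinear_add clinear_scaleC)
  ultimately show ?thesis using that by blast
qed

lemma von_neumann_algebra_memI:
  assumes "von_neumann_algebra M" and "bounded_clinear Z"
    and "\<And>T. T \<in> commutant M \<Longrightarrow> T \<circ> Z = Z \<circ> T"
  shows "Z \<in> M"
proof -
  have "Z \<in> commutant (commutant M)"
    using assms(2,3) unfolding commutant_def[of "commutant M"] by simp
  then show ?thesis using assms(1) by (simp add: von_neumann_algebra_def)
qed

lemma commutant_commute: "T \<in> commutant M \<Longrightarrow> X \<in> M \<Longrightarrow> T \<circ> X = X \<circ> T"
  by (simp add: commutant_def)

lemma von_neumann_algebra_product_of_symmetries:
  assumes M: "von_neumann_algebra M" and "U \<in> M" and U: "unitary U"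
    and "W \<in> M" and W: "unitary W" and UW: "adj U = adj W \<circ> U \<circ> W"
  shows "\<exists>S1\<in>M. \<exists>S2\<in>M. symmetry S1 \<and> symmetry S2 \<and> U = S1 \<circ> S2"
proof -
  obtain Z where Z: "symmetry Z" and ZU: "Z \<circ> U = adj U \<circ> Z"
    and Z_commute: "\<And>T. bounded_clinear T \<Longrightarrow> T \<circ> W = W \<circ> T \<Longrightarrow> T \<circ> adj W = adj W \<circ> T \<Longrightarrow> T \<circ> Z = Z \<circ> T"
    using exists_symmetry_intertwining_adjoint[OF U W UW] by blast
  have "adj W \<in> M" using M \<open>W \<in> M\<close> by (simp add: von_neumann_algebra_def)
  then have commute: "T \<circ> Z = Z \<circ> T" if "T \<in> commutant M" for T
    using that \<open>W \<in> M\<close> by (intro Z_commute commutant_commute) (simp_all add: commutant_def)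
  have "Z \<in> M"
    using M symmetryD(1)[OF Z] commute by (rule von_neumann_algebra_memI)
  moreover have "Z \<circ> U \<in> M"
    using M bounded_clinear_comp[OF symmetryD(1)[OF Z] unitaryD(1)[OF U]]
  proof (rule von_neumann_algebra_memI)
    show "T \<circ> (Z \<circ> U) = (Z \<circ> U) \<circ> T" if "T \<in> commutant M" for T
      using commute[OF that] commutant_commute[OF that \<open>U \<in> M\<close>] by (simp add: fun_eq_iff)
  qed
  moreover have "symmetry (Z \<circ> U)" by (rule symmetry_comp_intertwining[OF Z U ZU])
  moreover have "U = Z \<circ> (Z \<circ> U)" using symmetryD(3)[OF Z] by (simp add: fun_eq_iff)
  ultimately show ?thesis using Z by blast
qed

theorem proposition4p1:
  fixes M :: "('h::chilbert_space \<Rightarrow> 'h) set" and U :: "'h \<Rightarrow> 'h"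
  assumes "von_neumann_algebra M" and "U \<in> M" and "unitary U"
  shows "(\<exists>S1\<in>M. \<exists>S2\<in>M. symmetry S1 \<and> symmetry S2 \<and> U = S1 \<circ> S2) \<longleftrightarrow>
         (\<exists>W\<in>M. unitary W \<and> adj U = adj W \<circ> U \<circ> W)"
proof
  assume "\<exists>S1\<in>M. \<exists>S2\<in>M. symmetry S1 \<and> symmetry S2 \<and> U = S1 \<circ> S2"
  then obtain S1 S2 where "S1 \<in> M" and S1: "symmetry S1" and S2: "symmetry S2" and "U = S1 \<circ> S2"
    by blast
  then have "adj U = adj S1 \<circ> U \<circ> S1" using adj_product_of_symmetries[OF S1 S2] by simp
  then show "\<exists>W\<in>M. unitary W \<and> adj U = adj W \<circ> U \<circ> W"
    using \<open>S1 \<in> M\<close> S1 by (auto simp: symmetry_def)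
next
  assume "\<exists>W\<in>M. unitary W \<and> adj U = adj W \<circ> U \<circ> W"
  then show "\<exists>S1\<in>M. \<exists>S2\<in>M. symmetry S1 \<and> symmetry S2 \<and> U = S1 \<circ> S2"
    using von_neumann_algebra_product_of_symmetries[OF assms] by blast
qed

end
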